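(* Let $J\subseteq S$. The maps $\Pi_\downarrow^J$ and $\Pi_\uparrow^J$ are order-preserving with respect to $\le_S$.
   Context: $\mathfrak{S}_n$ is the symmetric group on $[n]$, $s_i=(i,i+1)$, $S=\{s_1,\dots,s_{n-1}\}$, one-line notation $w=w_1\cdots w_n$, $\mathrm{inv}(w)=\{(i,j):i<j,\ w_i>w_j\}$, weak order $u\le_S v\iff\mathrm{inv}(u)\subseteq\mathrm{inv}(v)$. For $J\subseteq S$, $\mathfrak{S}_n^J$ is the set of $w$ with $w_i<w_{i+1}$ whenever $s_i\in J$. Writing $J=S\setminus\{s_{j_1},\dots,s_{j_r}\}$ with $j_1<\dots<j_r$, the $J$-regions are $\{1,\dots,j_1\},\{j_1+1,\dots,j_2\},\dots,\{j_r+1,\dots,n\}$. $w\in\mathfrak{S}_n^J$ is $(J,231)$-avoiding if there are no indices $i<j<k$ in pairwise different $J$-regions with $w_k<w_i<w_j$ and $w_i=w_k+1$, and $(J,132)$-avoiding if there are no indices $i<j<k$ in pairwise different $J$-regions with $w_i<w_k<w_j$ and $w_k=w_i+1$. For $w\in\mathfrak{S}_n^J$, $\Pi_\downarrow^J(w)$ is the unique greatest $(J,231)$-avoiding element of $\mathfrak{S}_n^J$ that is $\le_S w$, and $\Pi_\uparrow^J(w)$ is the unique least $(J,132)$-avoiding element of $\mathfrak{S}_n^J$ that is $\ge_S w$ (both exist). *)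

theory Defs
  imports "HOL-Combinatorics.Permutations"
begin

(* A permutation w of [n] in one-line notation w_1 ... w_n is a function
   w :: nat => nat with  w permutes {1..n}  (w i = w_i).
   The simple reflection s_i is identified with the index i, so S = {1..<n}
   and a subset J of S is a set of naturals J \<subseteq> {1..<n}. *)

definition inv_set :: "nat \<Rightarrow> (nat \<Rightarrow> nat) \<Rightarrow> (nat \<times> nat) set" where
  "inv_set n w = {(i, j). 1 \<le> i \<and> i < j \<and> j \<le> n \<and> w i > w j}"

definition weak_le :: "nat \<Rightarrow> (nat \<Rightarrow> nat) \<Rightarrow> (nat \<Rightarrow> nat) \<Rightarrow> bool" where
  "weak_le n u v \<longleftrightarrow> inv_set n u \<subseteq> inv_set n v"

definition quot :: "nat \<Rightarrow> nat set \<Rightarrow> (nat \<Rightarrow> nat) set" where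
  "quot n J = {w. w permutes {1..n} \<and> (\<forall>i\<in>J. w i < w (Suc i))}"

(* index of the J-region containing position i: regions are
   {1..j_1}, {j_1+1..j_2}, ..., {j_r+1..n} where {j_1<...<j_r} = S - J *)
definition region :: "nat \<Rightarrow> nat set \<Rightarrow> nat \<Rightarrow> nat" where
  "region n J i = card {d. d \<in> {1..<n} \<and> d \<notin> J \<and> d < i}"

definition diff_regions :: "nat \<Rightarrow> nat set \<Rightarrow> nat \<Rightarrow> nat \<Rightarrow> nat \<Rightarrow> bool" where
  "diff_regions n J i j k \<longleftrightarrow>
     region n J i \<noteq> region n J j \<and> region n J j \<noteq> region n J k \<and> region n J i \<noteq> region n J k"

definition avoids231 :: "nat \<Rightarrow> nat set \<Rightarrow> (nat \<Rightarrow> nat) \<Rightarrow> bool" where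
  "avoids231 n J w \<longleftrightarrow> \<not> (\<exists>i j k. 1 \<le> i \<and> i < j \<and> j < k \<and> k \<le> n \<and> diff_regions n J i j k
      \<and> w k < w i \<and> w i < w j \<and> w i = w k + 1)"

definition avoids132 :: "nat \<Rightarrow> nat set \<Rightarrow> (nat \<Rightarrow> nat) \<Rightarrow> bool" where
  "avoids132 n J w \<longleftrightarrow> \<not> (\<exists>i j k. 1 \<le> i \<and> i < j \<and> j < k \<and> k \<le> n \<and> diff_regions n J i j k
      \<and> w i < w k \<and> w k < w j \<and> w k = w i + 1)"

definition Pi_down :: "nat \<Rightarrow> nat set \<Rightarrow> (nat \<Rightarrow> nat) \<Rightarrow> (nat \<Rightarrow> nat)" where
  "Pi_down n J w = (THE x. x \<in> quot n J \<and> avoids231 n J x \<and> weak_le n x w \<and>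
      (\<forall>y \<in> quot n J. avoids231 n J y \<and> weak_le n y w \<longrightarrow> weak_le n y x))"

definition Pi_up :: "nat \<Rightarrow> nat set \<Rightarrow> (nat \<Rightarrow> nat) \<Rightarrow> (nat \<Rightarrow> nat)" where
  "Pi_up n J w = (THE x. x \<in> quot n J \<and> avoids132 n J x \<and> weak_le n w x \<and>
      (\<forall>y \<in> quot n J. avoids132 n J y \<and> weak_le n w y \<longrightarrow> weak_le n x y))"

end

theory Submission
  imports Defs
begin

(* Both projections are characterised by a universal property in the weak order, so
   monotonicity is immediate once they exist: Pi_down u \<le> u \<le> v and Pi_down u avoids the
   (J,231) pattern, hence Pi_down u \<le> Pi_down v; dually for Pi_up.

   Existence is proved by descent on the inversion set.  If w has an occurrence (i,j,k) of the
   (J,231) pattern, exchanging the adjacent values w_i = w_k + 1 and w_k removes exactly the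
   inversion (i,k), and keeps w in the quotient because i and k lie in different regions.
   No (J,231)-avoiding y \<le> w inverts (i,k): otherwise every value strictly between y_k and
   y_i sits at a position outside i..k, so two consecutive values cross from a position
   \<ge> k to a position \<le> i, and together with j they form an occurrence in y.
   The (J,132) case is the mirror image. *)

lemma region_mono: "p \<le> q \<Longrightarrow> region n J p \<le> region n J q"
  unfolding region_def by (rule card_mono) auto

lemma region_Suc_eq: "d \<in> J \<Longrightarrow> region n J (Suc d) = region n J d"
  unfolding region_def by (rule arg_cong[where f = card]) (auto simp: less_Suc_eq)

lemma diff_regions_less:
  assumes "i < j" "j < k" "diff_regions n J i j k"
  shows "region n J i < region n J j" "region n J j < region n J k"
  using assms region_mono[of i j n J] region_mono[of j k n J] unfolding diff_regions_def by auto

lemma transpose_Suc_less_iff: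
  "{x, y} \<noteq> {a, Suc a} \<Longrightarrow> transpose a (Suc a) x < transpose a (Suc a) y \<longleftrightarrow> x < y"
  by (auto simp: transpose_def doubleton_eq_iff)

lemma transpose_Suc_comp_less_iff:
  assumes "inj w" "{w i, w k} = {a, Suc a}" "{p, q} \<noteq> {i, k}"
  shows "(transpose a (Suc a) \<circ> w) p < (transpose a (Suc a) \<circ> w) q \<longleftrightarrow> w p < w q"
proof -
  have "w ` {p, q} \<noteq> w ` {i, k}"
    unfolding inj_image_eq_iff[OF assms(1)] by (rule assms(3))
  then show ?thesis
    using assms(2) by (simp add: transpose_Suc_less_iff)
qed

lemma transpose_Suc_comp_in_quot:
  assumes w: "w \<in> quot n J" and ik: "1 \<le> i" "i < k" "k \<le> n"
    and ab: "{w i, w k} = {a, Suc a}" and regions: "region n J i \<noteq> region n J k"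
  shows "transpose a (Suc a) \<circ> w \<in> quot n J"
proof -
  have perm: "w permutes {1..n}" and asc: "\<And>d. d \<in> J \<Longrightarrow> w d < w (Suc d)"
    using w by (auto simp: quot_def)
  have "w i \<in> {1..n}" "w k \<in> {1..n}"
    using ik permutes_in_image[OF perm] by auto
  then have "a \<in> {1..n}" "Suc a \<in> {1..n}"
    using ab by (auto simp: doubleton_eq_iff)
  then have "transpose a (Suc a) \<circ> w permutes {1..n}"
    by (intro permutes_compose[OF perm] permutes_swap_id)
  moreover have "(transpose a (Suc a) \<circ> w) d < (transpose a (Suc a) \<circ> w) (Suc d)"
    if d: "d \<in> J" for d
  proof -
    have "{d, Suc d} \<noteq> {i, k}"
      using regions region_Suc_eq[OF d, of n] ik by (auto simp: doubleton_eq_iff)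
    then show ?thesis
      using transpose_Suc_comp_less_iff[OF permutes_inj[OF perm] ab] asc[OF d] by blast
  qed
  ultimately show ?thesis by (simp add: quot_def)
qed

lemma inv_set_transpose_Suc_comp:
  assumes "inj w" "{w i, w k} = {a, Suc a}" "i < k" "(p, q) \<noteq> (i, k)"
  shows "(p, q) \<in> inv_set n (transpose a (Suc a) \<circ> w) \<longleftrightarrow> (p, q) \<in> inv_set n w"
proof (cases "p < q")
  case True
  then have "{q, p} \<noteq> {i, k}"
    using assms(3,4) by (auto simp: doubleton_eq_iff)
  then show ?thesis
    using transpose_Suc_comp_less_iff[OF assms(1,2)] by (simp add: inv_set_def)
qed (simp add: inv_set_def)

lemma card_less_value:
  assumes w: "w permutes {1..n}" and p: "p \<in> {1..n}"
  shows "card {q \<in> {1..n}. w q < w p} = w p - 1"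
proof -
  have "w ` {q \<in> {1..n}. w q < w p} = {v \<in> w ` {1..n}. v < w p}"
    by auto
  also have "\<dots> = {1..<w p}"
    using permutes_image[OF w] permutes_in_image[OF w, of p] p by auto
  finally have "card {q \<in> {1..n}. w q < w p} = card {1..<w p}"
    using inj_on_subset[OF permutes_inj[OF w]] by (metis card_image subset_UNIV)
  then show ?thesis by simp
qed

lemma finite_inv_set: "finite (inv_set n w)"
  by (rule finite_subset[of _ "{1..n} \<times> {1..n}"]) (auto simp: inv_set_def)

lemma card_inv_set_le: "card (inv_set n w) \<le> n * n"
proof -
  have "card (inv_set n w) \<le> card ({1..n} \<times> {1..n})"
    by (rule card_mono) (auto simp: inv_set_def)
  then show ?thesis by (simp add: card_cartesian_product)
qed

lemma inv_set_eq_imp_less_iff: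
  assumes "inj u" "inj v" "inv_set n u = inv_set n v" "p \<in> {1..n}" "q \<in> {1..n}"
  shows "u p < u q \<longleftrightarrow> v p < v q"
proof (cases p q rule: linorder_cases)
  case less
  then have "(p, q) \<notin> inv_set n u \<longleftrightarrow> (p, q) \<notin> inv_set n v"
    using assms(3) by simp
  moreover have "u p \<noteq> u q" "v p \<noteq> v q"
    using less assms(1,2) by (auto dest: injD)
  ultimately show ?thesis
    using less assms(4,5) by (auto simp: inv_set_def)
next
  case greater
  then have "(q, p) \<in> inv_set n u \<longleftrightarrow> (q, p) \<in> inv_set n v"
    using assms(3) by simp
  then show ?thesis
    using greater assms(4,5) by (auto simp: inv_set_def)
qed simp

lemma weak_le_antisym:
  assumes u: "u permutes {1..n}" and v: "v permutes {1..n}"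
    and "weak_le n u v" "weak_le n v u"
  shows "u = v"
proof
  fix p
  have inv_eq: "inv_set n u = inv_set n v"
    using assms(3,4) by (simp add: weak_le_def)
  show "u p = v p"
  proof (cases "p \<in> {1..n}")
    case True
    have "{q \<in> {1..n}. u q < u p} = {q \<in> {1..n}. v q < v p}"
      using inv_set_eq_imp_less_iff[OF permutes_inj[OF u] permutes_inj[OF v] inv_eq] True
      by blast
    then have "u p - 1 = v p - 1"
      using card_less_value[OF u True] card_less_value[OF v True] by simp
    moreover have "u p \<ge> 1" "v p \<ge> 1"
      using True permutes_in_image[OF u] permutes_in_image[OF v] by auto
    ultimately show ?thesis by simp
  next
    case False
    then show ?thesis using u v by (simp add: permutes_not_in)
  qed
qed

lemma nat_exists_boundary:
  assumes "a \<le> b" "P a" "\<not> P b"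
  shows "\<exists>m. a \<le> m \<and> m < b \<and> P m \<and> \<not> P (Suc m)"
proof (rule ccontr)
  assume "\<nexists>m. a \<le> m \<and> m < b \<and> P m \<and> \<not> P (Suc m)"
  with assms(1,2) have "P b"
    by (induction rule: dec_induct) auto
  with assms(3) show False ..
qed

lemma consecutive_values_across:
  assumes y: "y permutes {1..n}" and ab: "a \<in> {1..n}" "b \<in> {1..n}" "y a < y b"
    and "P a" "Q b" and disjoint: "\<And>p. P p \<Longrightarrow> Q p \<Longrightarrow> False"
    and between: "\<And>p. p \<in> {1..n} \<Longrightarrow> y a < y p \<Longrightarrow> y p < y b \<Longrightarrow> P p \<or> Q p"
  obtains p q where "p \<in> {1..n}" "q \<in> {1..n}" "P p" "Q q" "y q = Suc (y p)" "y q \<le> y b"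
proof -
  have inj: "y p = y q \<Longrightarrow> p = q" for p q
    using permutes_inj[OF y] by (rule injD)
  define R where "R v \<longleftrightarrow> (\<exists>p\<in>{1..n}. y p = v \<and> P p)" for v
  have "R (y a)" "\<not> R (y b)"
    using ab \<open>P a\<close> \<open>Q b\<close> disjoint inj unfolding R_def by auto
  then obtain m where m: "y a \<le> m" "m < y b" "R m" "\<not> R (Suc m)"
    using nat_exists_boundary[of "y a" "y b" R] ab(3) by auto
  from \<open>R m\<close> obtain p where p: "p \<in> {1..n}" "y p = m" "P p"
    unfolding R_def by blast
  have "Suc m \<in> {1..n}"
    using m(2) permutes_in_image[OF y, of b] ab(2) by auto
  then obtain q where q: "q \<in> {1..n}" "y q = Suc m"
    using permutes_image[OF y] by (metis imageE)
  have "Q q"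
  proof (cases "Suc m = y b")
    case True
    then show ?thesis using q inj \<open>Q b\<close> by auto
  next
    case False
    then have "P q \<or> Q q"
      using between[OF q(1)] q(2) m by simp
    then show ?thesis using m(4) q unfolding R_def by blast
  qed
  with p q m show ?thesis using that by simp
qed

lemma avoids231_below_pattern:
  assumes w: "w permutes {1..n}" and y: "y permutes {1..n}"
    and below: "inv_set n y \<subseteq> inv_set n w"
    and ijk: "1 \<le> i" "i < j" "j < k" "k \<le> n" and regions: "diff_regions n J i j k"
    and pattern: "w k < w i" "w i < w j" "w i = w k + 1"
    and avoids: "avoids231 n J y"
  shows "(i, k) \<notin> inv_set n y"
proof
  assume "(i, k) \<in> inv_set n y"
  then have ki: "y k < y i" by (simp add: inv_set_def)
  have ascent_kept: "y p < y q" if "1 \<le> p" "p < q" "q \<le> n" "w p < w q" for p q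
  proof -
    have "(p, q) \<notin> inv_set n y"
      using that below by (auto simp: inv_set_def)
    moreover have "y p \<noteq> y q"
      using that permutes_inj[OF y] by (auto dest: injD)
    ultimately show ?thesis using that by (auto simp: inv_set_def)
  qed
  have outside: "p < i \<or> k < p" if p: "p \<in> {1..n}" "y k < y p" "y p < y i" for p
  proof -
    have "p \<noteq> i" "p \<noteq> k"
      using p by auto
    then have "w p \<noteq> w i" "w p \<noteq> w k"
      using permutes_inj[OF w] by (auto dest: injD)
    then have "w i < w p \<or> w p < w k"
      using pattern by auto
    then show ?thesis
    proof
      assume "w i < w p"
      then have "\<not> i < p" using ascent_kept[of i p] p ijk by auto
      then show ?thesis using \<open>p \<noteq> i\<close> by simp
    next
      assume "w p < w k"
      then have "\<not> p < k" using ascent_kept[of p k] p ijk by auto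
      then show ?thesis using \<open>p \<noteq> k\<close> by simp
    qed
  qed
  have between: "k \<le> p \<or> p \<le> i" if "p \<in> {1..n}" "y k < y p" "y p < y i" for p
    using outside[OF that] by auto
  obtain p q where pq: "p \<in> {1..n}" "q \<in> {1..n}" "k \<le> p" "q \<le> i" "y q = Suc (y p)" "y q \<le> y i"
    by (rule consecutive_values_across[OF y _ _ ki _ _ _ between]) (use ijk in auto)
  have "y i < y j"
    using ascent_kept[of i j] ijk pattern by simp
  moreover have "diff_regions n J q j p"
    using diff_regions_less[OF ijk(2,3) regions] region_mono[of q i n J] region_mono[of k p n J] pq
    unfolding diff_regions_def by auto
  ultimately have "1 \<le> q \<and> q < j \<and> j < p \<and> p \<le> n \<and> diff_regions n J q j p
      \<and> y p < y q \<and> y q < y j \<and> y q = y p + 1"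
    using pq ijk by auto
  then show False
    using avoids unfolding avoids231_def by blast
qed

lemma avoids132_above_pattern:
  assumes w: "w permutes {1..n}" and y: "y permutes {1..n}"
    and above: "inv_set n w \<subseteq> inv_set n y"
    and ijk: "1 \<le> i" "i < j" "j < k" "k \<le> n" and regions: "diff_regions n J i j k"
    and pattern: "w i < w k" "w k < w j" "w k = w i + 1"
    and avoids: "avoids132 n J y"
  shows "(i, k) \<in> inv_set n y"
proof (rule ccontr)
  assume "(i, k) \<notin> inv_set n y"
  then have "\<not> y k < y i"
    using ijk by (simp add: inv_set_def)
  moreover have "y i \<noteq> y k"
    using ijk by (simp add: inj_eq[OF permutes_inj[OF y]])
  ultimately have ik: "y i < y k"
    by simp
  have descent_kept: "y q < y p" if "1 \<le> p" "p < q" "q \<le> n" "w q < w p" for p q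
  proof -
    have "(p, q) \<in> inv_set n y"
      using that above by (auto simp: inv_set_def)
    then show ?thesis by (simp add: inv_set_def)
  qed
  have outside: "p < i \<or> k < p" if p: "p \<in> {1..n}" "y i < y p" "y p < y k" for p
  proof -
    have "p \<noteq> i" "p \<noteq> k"
      using p by auto
    then have "w p \<noteq> w i" "w p \<noteq> w k"
      using permutes_inj[OF w] by (auto dest: injD)
    then have "w k < w p \<or> w p < w i"
      using pattern by auto
    then show ?thesis
    proof
      assume "w k < w p"
      then have "\<not> p < k" using descent_kept[of p k] p ijk by auto
      then show ?thesis using \<open>p \<noteq> k\<close> by simp
    next
      assume "w p < w i"
      then have "\<not> i < p" using descent_kept[of i p] p ijk by auto
      then show ?thesis using \<open>p \<noteq> i\<close> by simp
    qed
  qed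
  have between: "p \<le> i \<or> k \<le> p" if "p \<in> {1..n}" "y i < y p" "y p < y k" for p
    using outside[OF that] by auto
  obtain p q where pq: "p \<in> {1..n}" "q \<in> {1..n}" "p \<le> i" "k \<le> q" "y q = Suc (y p)" "y q \<le> y k"
    by (rule consecutive_values_across[OF y _ _ ik _ _ _ between]) (use ijk in auto)
  have "y k < y j"
    using descent_kept[of j k] ijk pattern by simp
  moreover have "diff_regions n J p j q"
    using diff_regions_less[OF ijk(2,3) regions] region_mono[of p i n J] region_mono[of k q n J] pq
    unfolding diff_regions_def by auto
  ultimately have "1 \<le> p \<and> p < j \<and> j < q \<and> q \<le> n \<and> diff_regions n J p j q
      \<and> y p < y q \<and> y q < y j \<and> y q = y p + 1"
    using pq ijk by auto
  then show False
    using avoids unfolding avoids132_def by blast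
qed

lemma not_avoids231_descent:
  assumes w: "w \<in> quot n J" and "\<not> avoids231 n J w"
  shows "\<exists>w'\<in>quot n J. inv_set n w' \<subset> inv_set n w \<and>
    (\<forall>y\<in>quot n J. avoids231 n J y \<and> weak_le n y w \<longrightarrow> weak_le n y w')"
proof -
  obtain i j k where ijk: "1 \<le> i" "i < j" "j < k" "k \<le> n" and regions: "diff_regions n J i j k"
    and pattern: "w k < w i" "w i < w j" "w i = w k + 1"
    using assms(2) unfolding avoids231_def by blast
  have perm: "w permutes {1..n}"
    using w by (simp add: quot_def)
  define w' where "w' = transpose (w k) (Suc (w k)) \<circ> w"
  have ab: "{w i, w k} = {w k, Suc (w k)}"
    using pattern by auto
  have "w' \<in> quot n J"
    unfolding w'_def
    by (rule transpose_Suc_comp_in_quot[OF w _ _ _ ab]) (use ijk regions in \<open>auto simp: diff_regions_def\<close>)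
  moreover have ik: "(i, k) \<in> inv_set n w" "(i, k) \<notin> inv_set n w'"
    using ijk pattern by (simp_all add: inv_set_def w'_def)
  moreover have inv_w': "inv_set n w' = inv_set n w - {(i, k)}"
  proof (intro set_eqI)
    fix pq :: "nat \<times> nat"
    show "pq \<in> inv_set n w' \<longleftrightarrow> pq \<in> inv_set n w - {(i, k)}"
      using inv_set_transpose_Suc_comp[OF permutes_inj[OF perm] ab less_trans[OF ijk(2,3)],
          of "fst pq" "snd pq" n] ik
      unfolding w'_def by (cases "pq = (i, k)") auto
  qed
  moreover have "weak_le n y w'" if y: "y \<in> quot n J" "avoids231 n J y" "weak_le n y w" for y
  proof -
    have "(i, k) \<notin> inv_set n y"
      using y perm ijk regions pattern avoids231_below_pattern unfolding quot_def weak_le_def by blast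
    then show ?thesis
      using y(3) inv_w' by (auto simp: weak_le_def)
  qed
  ultimately show ?thesis
    by blast
qed

lemma not_avoids132_ascent:
  assumes w: "w \<in> quot n J" and "\<not> avoids132 n J w"
  shows "\<exists>w'\<in>quot n J. inv_set n w \<subset> inv_set n w' \<and>
    (\<forall>y\<in>quot n J. avoids132 n J y \<and> weak_le n w y \<longrightarrow> weak_le n w' y)"
proof -
  obtain i j k where ijk: "1 \<le> i" "i < j" "j < k" "k \<le> n" and regions: "diff_regions n J i j k"
    and pattern: "w i < w k" "w k < w j" "w k = w i + 1"
    using assms(2) unfolding avoids132_def by blast
  have perm: "w permutes {1..n}"
    using w by (simp add: quot_def)
  define w' where "w' = transpose (w i) (Suc (w i)) \<circ> w"
  have ab: "{w i, w k} = {w i, Suc (w i)}"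
    using pattern by auto
  have "w' \<in> quot n J"
    unfolding w'_def
    by (rule transpose_Suc_comp_in_quot[OF w _ _ _ ab]) (use ijk regions in \<open>auto simp: diff_regions_def\<close>)
  moreover have ik: "(i, k) \<notin> inv_set n w" "(i, k) \<in> inv_set n w'"
    using ijk pattern by (simp_all add: inv_set_def w'_def)
  moreover have inv_w': "inv_set n w' = insert (i, k) (inv_set n w)"
  proof (intro set_eqI)
    fix pq :: "nat \<times> nat"
    show "pq \<in> inv_set n w' \<longleftrightarrow> pq \<in> insert (i, k) (inv_set n w)"
      using inv_set_transpose_Suc_comp[OF permutes_inj[OF perm] ab less_trans[OF ijk(2,3)],
          of "fst pq" "snd pq" n] ik
      unfolding w'_def by (cases "pq = (i, k)") auto
  qed
  moreover have "weak_le n w' y" if y: "y \<in> quot n J" "avoids132 n J y" "weak_le n w y" for y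
  proof -
    have "(i, k) \<in> inv_set n y"
      using y perm ijk regions pattern avoids132_above_pattern unfolding quot_def weak_le_def by blast
    then show ?thesis
      using y(3) inv_w' by (auto simp: weak_le_def)
  qed
  ultimately show ?thesis
    by blast
qed

lemma greatest_below_by_descent:
  fixes f :: "'a \<Rightarrow> nat"
  assumes refl: "\<And>x. le x x" and trans: "\<And>x y z. le x y \<Longrightarrow> le y z \<Longrightarrow> le x z"
    and descent: "\<And>w. w \<in> A \<Longrightarrow> \<not> P w \<Longrightarrow>
      \<exists>w'\<in>A. f w' < f w \<and> le w' w \<and> (\<forall>y\<in>A. P y \<and> le y w \<longrightarrow> le y w')"
    and "w \<in> A"
  shows "\<exists>x\<in>A. P x \<and> le x w \<and> (\<forall>y\<in>A. P y \<and> le y w \<longrightarrow> le y x)"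
  using \<open>w \<in> A\<close>
proof (induction "f w" arbitrary: w rule: less_induct)
  case less
  show ?case
  proof (cases "P w")
    case True
    then show ?thesis using less.prems refl by blast
  next
    case False
    then obtain w' where w': "w' \<in> A" "f w' < f w" "le w' w"
      and below_w': "\<forall>y\<in>A. P y \<and> le y w \<longrightarrow> le y w'"
      using descent less.prems by blast
    then obtain x where "x \<in> A" "P x" "le x w'" "\<forall>y\<in>A. P y \<and> le y w' \<longrightarrow> le y x"
      using less.hyps by blast
    then show ?thesis
      using w' below_w' trans by blast
  qed
qed

lemma ex_greatest_avoids231_below:
  assumes "w \<in> quot n J"
  shows "\<exists>x\<in>quot n J. avoids231 n J x \<and> weak_le n x w \<and>
    (\<forall>y\<in>quot n J. avoids231 n J y \<and> weak_le n y w \<longrightarrow> weak_le n y x)"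
proof (rule greatest_below_by_descent[where f = "\<lambda>w. card (inv_set n w)", OF _ _ _ assms])
  fix w assume "w \<in> quot n J" "\<not> avoids231 n J w"
  then show "\<exists>w'\<in>quot n J. card (inv_set n w') < card (inv_set n w) \<and> weak_le n w' w \<and>
      (\<forall>y\<in>quot n J. avoids231 n J y \<and> weak_le n y w \<longrightarrow> weak_le n y w')"
    using not_avoids231_descent psubset_card_mono[OF finite_inv_set]
    unfolding weak_le_def by (meson less_imp_le)
qed (auto simp: weak_le_def)

lemma ex_least_avoids132_above:
  assumes "w \<in> quot n J"
  shows "\<exists>x\<in>quot n J. avoids132 n J x \<and> weak_le n w x \<and>
    (\<forall>y\<in>quot n J. avoids132 n J y \<and> weak_le n w y \<longrightarrow> weak_le n x y)"
proof (rule greatest_below_by_descent[where f = "\<lambda>w. n * n - card (inv_set n w)"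
      and le = "\<lambda>x y. weak_le n y x", OF _ _ _ assms])
  fix w assume "w \<in> quot n J" "\<not> avoids132 n J w"
  then obtain w' where w': "w' \<in> quot n J" "inv_set n w \<subset> inv_set n w'"
    "\<forall>y\<in>quot n J. avoids132 n J y \<and> weak_le n w y \<longrightarrow> weak_le n w' y"
    using not_avoids132_ascent by blast
  have "card (inv_set n w) < card (inv_set n w')"
    using psubset_card_mono[OF finite_inv_set w'(2)] .
  then have "n * n - card (inv_set n w') < n * n - card (inv_set n w)"
    using card_inv_set_le[of n w'] by linarith
  then show "\<exists>w'\<in>quot n J. n * n - card (inv_set n w') < n * n - card (inv_set n w) \<and>
      weak_le n w w' \<and> (\<forall>y\<in>quot n J. avoids132 n J y \<and> weak_le n w y \<longrightarrow> weak_le n w' y)"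
    using w' unfolding weak_le_def by blast
qed (auto simp: weak_le_def)

lemma Pi_down_eqI:
  assumes "x \<in> quot n J" "avoids231 n J x" "weak_le n x w"
    and "\<forall>y\<in>quot n J. avoids231 n J y \<and> weak_le n y w \<longrightarrow> weak_le n y x"
  shows "Pi_down n J w = x"
  unfolding Pi_down_def
proof (rule the_equality)
  fix x' assume "x' \<in> quot n J \<and> avoids231 n J x' \<and> weak_le n x' w \<and>
    (\<forall>y\<in>quot n J. avoids231 n J y \<and> weak_le n y w \<longrightarrow> weak_le n y x')"
  then show "x' = x"
    using assms weak_le_antisym unfolding quot_def by blast
qed (use assms in blast)

lemma Pi_up_eqI:
  assumes "x \<in> quot n J" "avoids132 n J x" "weak_le n w x"
    and "\<forall>y\<in>quot n J. avoids132 n J y \<and> weak_le n w y \<longrightarrow> weak_le n x y"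
  shows "Pi_up n J w = x"
  unfolding Pi_up_def
proof (rule the_equality)
  fix x' assume "x' \<in> quot n J \<and> avoids132 n J x' \<and> weak_le n w x' \<and>
    (\<forall>y\<in>quot n J. avoids132 n J y \<and> weak_le n w y \<longrightarrow> weak_le n x' y)"
  then show "x' = x"
    using assms weak_le_antisym unfolding quot_def by blast
qed (use assms in blast)

lemma Pi_down_greatest:
  assumes "w \<in> quot n J"
  shows "Pi_down n J w \<in> quot n J" "avoids231 n J (Pi_down n J w)" "weak_le n (Pi_down n J w) w"
    and "\<And>y. y \<in> quot n J \<Longrightarrow> avoids231 n J y \<Longrightarrow> weak_le n y w \<Longrightarrow> weak_le n y (Pi_down n J w)"
  using ex_greatest_avoids231_below[OF assms] by (metis Pi_down_eqI)+

lemma Pi_up_least: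
  assumes "w \<in> quot n J"
  shows "Pi_up n J w \<in> quot n J" "avoids132 n J (Pi_up n J w)" "weak_le n w (Pi_up n J w)"
    and "\<And>y. y \<in> quot n J \<Longrightarrow> avoids132 n J y \<Longrightarrow> weak_le n w y \<Longrightarrow> weak_le n (Pi_up n J w) y"
  using ex_least_avoids132_above[OF assms] by (metis Pi_up_eqI)+

theorem lemma3p15:
  fixes n :: nat and J :: "nat set" and u v :: "nat \<Rightarrow> nat"
  assumes "J \<subseteq> {1..<n}"
    and "u \<in> quot n J" and "v \<in> quot n J"
    and "weak_le n u v"
  shows "weak_le n (Pi_down n J u) (Pi_down n J v) \<and> weak_le n (Pi_up n J u) (Pi_up n J v)"
proof
  have "weak_le n (Pi_down n J u) v"
    using Pi_down_greatest(3)[OF assms(2)] assms(4) by (auto simp: weak_le_def)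
  then show "weak_le n (Pi_down n J u) (Pi_down n J v)"
    using Pi_down_greatest[OF assms(2)] Pi_down_greatest(4)[OF assms(3)] by blast
next
  have "weak_le n u (Pi_up n J v)"
    using Pi_up_least(3)[OF assms(3)] assms(4) by (auto simp: weak_le_def)
  then show "weak_le n (Pi_up n J u) (Pi_up n J v)"
    using Pi_up_least[OF assms(3)] Pi_up_least(4)[OF assms(2)] by blast
qed

end
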